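(* Let $\Phi$ be the standard normal distribution function. For $n\ge 3$ let $\mathcal{R}_n$ be the set of real symmetric positive semi-definite $n\times n$ matrices with unit diagonal, and for $R\in\mathcal{R}_n$ let $R^*$ be the correlation matrix of $(\Phi(X_1),\dots,\Phi(X_n))$, where $(X_1,\dots,X_n)$ is centered Gaussian with covariance $R$. Then the set $\{R^*: R\in\mathcal{R}_n\}$ is a strict subset of $\mathcal{R}_n$. More precisely, with $R_{-1/2}=\begin{pmatrix}1&-1/2&-1/2\\-1/2&1&-1/2\\-1/2&-1/2&1\end{pmatrix}$, there is no centered Gaussian vector $(X,Y,Z)$ with unit variances such that the correlation matrix of $(\Phi(X),\Phi(Y),\Phi(Z))$ is $R_{-1/2}$, and for $n\ge 4$ the block diagonal matrix $\mathrm{diag}(R_{-1/2},I_{n-3})$ belongs to $\mathcal{R}_n$ but is not of the form $R^*$ for any $R\in\mathcal{R}_n$. *)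

theory Defs
  imports "HOL-Probability.Probability"
begin

definition Phi :: "real \<Rightarrow> real" where
  "Phi x = measure (density lborel std_normal_density) {..x}"

text \<open>n x n real matrices are functions nat => nat => real, required to vanish
  outside the index range {0..<n}. The set R_n of correlation matrices:
  symmetric, positive semi-definite, unit diagonal.\<close>
definition corr_matrices :: "nat \<Rightarrow> (nat \<Rightarrow> nat \<Rightarrow> real) set" where
  "corr_matrices n = {R.
     (\<forall>i j. (i \<ge> n \<or> j \<ge> n) \<longrightarrow> R i j = 0) \<and>
     (\<forall>i<n. \<forall>j<n. R i j = R j i) \<and>
     (\<forall>i<n. R i i = 1) \<and>
     (\<forall>x::nat \<Rightarrow> real. 0 \<le> (\<Sum>i<n. \<Sum>j<n. x i * R i j * x j))}"

text \<open>(X_0,...,X_{n-1}) is a centered Gaussian vector with covariance matrix R: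
  each X_i is a real random variable, and every linear combination sum a_i X_i is
  centered normal with variance a^T R a (degenerate = almost surely 0 when the
  variance is 0).\<close>
definition gaussian_vector :: "'a measure \<Rightarrow> nat \<Rightarrow> (nat \<Rightarrow> 'a \<Rightarrow> real) \<Rightarrow> (nat \<Rightarrow> nat \<Rightarrow> real) \<Rightarrow> bool" where
  "gaussian_vector M n X R \<longleftrightarrow>
     (\<forall>i<n. X i \<in> borel_measurable M) \<and>
     (\<forall>a::nat \<Rightarrow> real.
        let v = (\<Sum>i<n. \<Sum>j<n. a i * R i j * a j);
            Y = (\<lambda>\<omega>. \<Sum>i<n. a i * X i \<omega>)
        in if v = 0 then (AE \<omega> in M. Y \<omega> = 0)
           else distributed M lborel Y (normal_density 0 (sqrt v)))"

definition covar :: "'a measure \<Rightarrow> ('a \<Rightarrow> real) \<Rightarrow> ('a \<Rightarrow> real) \<Rightarrow> real" where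
  "covar M U V = (\<integral>\<omega>. (U \<omega> - (\<integral>\<omega>'. U \<omega>' \<partial>M)) * (V \<omega> - (\<integral>\<omega>'. V \<omega>' \<partial>M)) \<partial>M)"

definition correl :: "'a measure \<Rightarrow> ('a \<Rightarrow> real) \<Rightarrow> ('a \<Rightarrow> real) \<Rightarrow> real" where
  "correl M U V = covar M U V / sqrt (covar M U U * covar M V V)"

definition correl_matrix :: "'a measure \<Rightarrow> nat \<Rightarrow> (nat \<Rightarrow> 'a \<Rightarrow> real) \<Rightarrow> (nat \<Rightarrow> nat \<Rightarrow> real)" where
  "correl_matrix M n U = (\<lambda>i j. if i < n \<and> j < n then correl M (U i) (U j) else 0)"

text \<open>The set {R^* : R in R_n}, where R^* is the correlation matrix of
  (Phi(X_1),...,Phi(X_n)) for a centered Gaussian X with covariance R, realised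
  on some probability space whose sample space has type 'a.\<close>
definition Rstar_set :: "'a itself \<Rightarrow> nat \<Rightarrow> (nat \<Rightarrow> nat \<Rightarrow> real) set" where
  "Rstar_set (_ :: 'a itself) n = {S. \<exists>(M :: 'a measure) X R.
      prob_space M \<and> R \<in> corr_matrices n \<and> gaussian_vector M n X R \<and>
      S = correl_matrix M n (\<lambda>i \<omega>. Phi (X i \<omega>))}"

definition block_matrix :: "nat \<Rightarrow> nat \<Rightarrow> nat \<Rightarrow> real" where
  "block_matrix n = (\<lambda>i j. if i < n \<and> j < n then
       (if i = j then 1 else if i < 3 \<and> j < 3 then - 1/2 else 0) else 0)"

end

(*
  For a centred Gaussian vector X with unit variances, the correlation matrix of (Phi X_i) is the
  normalised covariance matrix of the bounded variables Phi X_i, hence again a correlation matrix.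
  If it were diag(R_{-1/2}, I), then Phi X_0 + Phi X_1 + Phi X_2 would have variance 0, i.e. be
  almost surely constant. Writing X_j = r X_0 + sqrt (1 - r^2) W with W standard normal and
  independent of X_0, conditioning on X_0 = x turns this into
  Phi x + cond_exp_Phi r1 x + cond_exp_Phi r2 x = const for almost every x, where
  cond_exp_Phi r x = E Phi (r x + sqrt (1 - r^2) W) and r1, r2 are the correlations of X_0 with
  X_1, X_2. Comparing the limits at +oo and -oo shows that exactly one of r1, r2 vanishes; applied
  with each X_i in the role of X_0 this is contradictory.
  Independence of uncorrelated jointly Gaussian variables is derived from Levy's uniqueness
  theorem, applied to the characteristic functions of suitably reweighted probability measures.
*)

theory Submission
  imports Defs
begin

section \<open>The standard normal distribution\<close>

interpretation std_normal: real_distribution std_normal_distribution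
  by (rule real_dist_normal_dist)

lemma Phi_eq_cdf: "Phi = cdf std_normal_distribution"
  by (rule ext) (simp add: Phi_def cdf_def)

lemma Phi_mono: "x \<le> y \<Longrightarrow> Phi x \<le> Phi y"
  unfolding Phi_eq_cdf by (rule std_normal.cdf_nondecreasing)

lemma Phi_nonneg: "0 \<le> Phi x"
  unfolding Phi_eq_cdf by (rule std_normal.cdf_nonneg)

lemma Phi_le_1: "Phi x \<le> 1"
  unfolding Phi_eq_cdf by (rule std_normal.cdf_bounded_prob)

lemma abs_Phi_le_1: "\<bar>Phi x\<bar> \<le> 1"
  using Phi_nonneg[of x] Phi_le_1[of x] by simp

lemma borel_measurable_Phi [measurable]: "Phi \<in> borel_measurable borel"
  by (rule borel_measurable_mono) (auto simp: mono_def Phi_mono)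

lemma Phi_at_top: "(Phi \<longlongrightarrow> 1) at_top"
  unfolding Phi_eq_cdf by (rule std_normal.cdf_lim_at_top_prob)

lemma Phi_at_bot: "(Phi \<longlongrightarrow> 0) at_bot"
  unfolding Phi_eq_cdf by (rule std_normal.cdf_lim_at_bot)

lemma measure_std_normal_UNIV: "measure std_normal_distribution UNIV = 1"
  using std_normal.prob_space by simp

lemma integral_distributed_std_normal:
  fixes g :: "real \<Rightarrow> 'b::{banach, second_countable_topology}"
  assumes "distributed M lborel X std_normal_density" and [measurable]: "g \<in> borel_measurable borel"
  shows "(\<integral>\<omega>. g (X \<omega>) \<partial>M) = (\<integral>x. g x \<partial>std_normal_distribution)"
proof -
  have [measurable]: "X \<in> borel_measurable M"
    using distributed_measurable[OF assms(1)] by simp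
  have "(\<integral>\<omega>. g (X \<omega>) \<partial>M) = (\<integral>x. g x \<partial>distr M lborel X)"
    by (rule integral_distr[of X M lborel g, symmetric]) auto
  then show ?thesis
    unfolding distributed_distr_eq_density[OF assms(1)] .
qed

lemma integral_indicator_distributed_std_normal:
  assumes "distributed M lborel X std_normal_density" and "A \<in> sets borel"
  shows "(\<integral>\<omega>. indicator A (X \<omega>) \<partial>M) = measure std_normal_distribution A"
  using integral_distributed_std_normal[OF assms(1), of "indicator A :: real \<Rightarrow> real"] assms(2)
  by simp

definition Phi_mean :: real where
  "Phi_mean = (\<integral>x. Phi x \<partial>std_normal_distribution)"

definition Phi_var :: real where
  "Phi_var = (\<integral>x. (Phi x - Phi_mean)\<^sup>2 \<partial>std_normal_distribution)"

lemma Phi_mean_bounds: "0 \<le> Phi_mean" "Phi_mean \<le> 1"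
proof -
  have "Phi_mean \<le> (\<integral>x. 1 \<partial>std_normal_distribution)"
    unfolding Phi_mean_def
    by (intro integral_mono std_normal.integrable_const_bound[where B=1]) (auto simp: Phi_le_1 abs_Phi_le_1)
  then show "Phi_mean \<le> 1" by (simp add: measure_std_normal_UNIV)
  show "0 \<le> Phi_mean"
    unfolding Phi_mean_def by (intro Bochner_Integration.integral_nonneg) (auto simp: Phi_nonneg)
qed

lemma abs_Phi_minus_mean_le_1: "\<bar>Phi x - Phi_mean\<bar> \<le> 1"
  using Phi_nonneg[of x] Phi_le_1[of x] Phi_mean_bounds by (simp add: abs_le_iff)

lemma AE_lborel_exists_in_interval:
  fixes a :: real
  assumes "AE x in lborel. P x"
  shows "\<exists>x. a \<le> x \<and> x \<le> a + 1 \<and> P x"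
proof (rule ccontr)
  assume "\<not> ?thesis"
  then have sub: "{a..a+1} \<subseteq> {x \<in> space lborel. \<not> P x}" by auto
  from assms obtain N where N: "{x \<in> space lborel. \<not> P x} \<subseteq> N" "emeasure lborel N = 0" "N \<in> sets lborel"
    by (auto elim!: AE_E)
  have "emeasure lborel {a..a+1} \<le> emeasure lborel N"
    using sub N by (intro emeasure_mono) auto
  then show False using N by simp
qed

lemma AE_lborel_imp_frequently_at_top:
  assumes "AE x in lborel. P x"
  shows "\<exists>\<^sub>F x in at_top. P (x::real)"
  unfolding frequently_def eventually_at_top_linorder
proof
  assume "\<exists>a. \<forall>x\<ge>a. \<not> P x"
  then obtain a where "\<And>x. x \<ge> a \<Longrightarrow> \<not> P x" by blast
  with AE_lborel_exists_in_interval[OF assms, of a] show False by blast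
qed

lemma AE_lborel_imp_frequently_at_bot:
  assumes "AE x in lborel. P x"
  shows "\<exists>\<^sub>F x in at_bot. P (x::real)"
  unfolding frequently_def eventually_at_bot_linorder
proof
  assume "\<exists>a. \<forall>x\<le>a. \<not> P x"
  then obtain a where "\<And>x. x \<le> a \<Longrightarrow> \<not> P x" by blast
  with AE_lborel_exists_in_interval[OF assms, of "a - 1"] show False by auto
qed

lemma tendsto_eq_if_frequently_eq:
  fixes f :: "'a \<Rightarrow> 'b::t1_space"
  assumes "(f \<longlongrightarrow> l) F" and "\<exists>\<^sub>F x in F. f x = c"
  shows "l = c"
proof (rule ccontr)
  assume "l \<noteq> c"
  then have "\<forall>\<^sub>F x in F. f x \<noteq> c"
    using tendsto_imp_eventually_ne[OF assms(1)] by blast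
  with assms(2) show False
    by (simp add: frequently_def)
qed

lemma AE_std_normal_imp_AE_lborel:
  assumes "AE x in std_normal_distribution. P x"
  shows "AE x in lborel. P x"
proof -
  have "AE x in lborel. 0 < std_normal_density x \<longrightarrow> P x"
    using assms by (subst (asm) AE_density) auto
  then show ?thesis
    by (rule AE_mp) (auto intro!: AE_I2 normal_density_pos)
qed

lemma Phi_var_pos: "0 < Phi_var"
proof -
  have int: "integrable std_normal_distribution (\<lambda>x. (Phi x - Phi_mean)\<^sup>2)"
    using abs_Phi_minus_mean_le_1
    by (intro std_normal.integrable_const_bound[where B=1])
      (auto intro!: AE_I2 simp: abs_le_square_iff[of _ 1, simplified])
  have "Phi_var \<noteq> 0"
  proof
    assume "Phi_var = 0"
    then have "AE x in std_normal_distribution. (Phi x - Phi_mean)\<^sup>2 = 0"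
      using int unfolding Phi_var_def by (subst (asm) integral_nonneg_eq_0_iff_AE) auto
    then have "AE x in lborel. Phi x = Phi_mean"
      by (intro AE_std_normal_imp_AE_lborel) auto
    then have "1 = Phi_mean" "0 = Phi_mean"
      using tendsto_eq_if_frequently_eq[OF Phi_at_top AE_lborel_imp_frequently_at_top]
        tendsto_eq_if_frequently_eq[OF Phi_at_bot AE_lborel_imp_frequently_at_bot] by blast+
    then show False by simp
  qed
  moreover have "0 \<le> Phi_var"
    unfolding Phi_var_def by (intro Bochner_Integration.integral_nonneg) auto
  ultimately show ?thesis by simp
qed

section \<open>Gaussian pairs\<close>

text \<open>\<open>(X, Y)\<close> is a centred Gaussian vector with covariance matrix \<open>[[1, r], [r, 1]]\<close>,
  in the sense of \<open>gaussian_vector\<close>.\<close>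

definition gaussian_pair :: "'a measure \<Rightarrow> real \<Rightarrow> ('a \<Rightarrow> real) \<Rightarrow> ('a \<Rightarrow> real) \<Rightarrow> bool" where
  "gaussian_pair M r X Y \<longleftrightarrow>
     (\<forall>a b. if a\<^sup>2 + 2*a*b*r + b\<^sup>2 = 0 then (AE \<omega> in M. a * X \<omega> + b * Y \<omega> = 0)
           else distributed M lborel (\<lambda>\<omega>. a * X \<omega> + b * Y \<omega>)
                  (normal_density 0 (sqrt (a\<^sup>2 + 2*a*b*r + b\<^sup>2))))"

lemma gaussian_pair_AE_zero:
  assumes "gaussian_pair M r X Y" and "a\<^sup>2 + 2*a*b*r + b\<^sup>2 = 0"
  shows "AE \<omega> in M. a * X \<omega> + b * Y \<omega> = 0"
  using assms(1)[unfolded gaussian_pair_def, rule_format, of a b] assms(2) by simp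

lemma gaussian_pair_distributed:
  assumes "gaussian_pair M r X Y" and "a\<^sup>2 + 2*a*b*r + b\<^sup>2 \<noteq> 0"
  shows "distributed M lborel (\<lambda>\<omega>. a * X \<omega> + b * Y \<omega>) (normal_density 0 (sqrt (a\<^sup>2 + 2*a*b*r + b\<^sup>2)))"
  using assms(1)[unfolded gaussian_pair_def, rule_format, of a b] assms(2) by simp

lemma gaussian_pair_0_distributed:
  "gaussian_pair M 0 X W \<Longrightarrow> a \<noteq> 0 \<or> b \<noteq> 0 \<Longrightarrow>
     distributed M lborel (\<lambda>\<omega>. a * X \<omega> + b * W \<omega>) (normal_density 0 (sqrt (a\<^sup>2 + b\<^sup>2)))"
  using gaussian_pair_distributed[of M 0 X W a b] by (simp add: sum_power2_eq_zero_iff)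

lemma gaussian_pair_std_normal:
  assumes "gaussian_pair M r X Y"
  shows "distributed M lborel X std_normal_density" "distributed M lborel Y std_normal_density"
  using gaussian_pair_distributed[OF assms, of 1 0] gaussian_pair_distributed[OF assms, of 0 1] by simp_all

lemma gaussian_pair_measurable:
  assumes "gaussian_pair M r X Y"
  shows "X \<in> borel_measurable M" "Y \<in> borel_measurable M"
  using distributed_measurable[OF gaussian_pair_std_normal(1)[OF assms]]
    distributed_measurable[OF gaussian_pair_std_normal(2)[OF assms]] by simp_all

lemma char_gaussian_pair_0:
  assumes M: "prob_space M" and XW: "gaussian_pair M 0 X W"
  shows "(CLINT \<omega>|M. iexp (a * X \<omega> + b * W \<omega>)) = complex_of_real (exp (-(a\<^sup>2 + b\<^sup>2) / 2))"
proof (cases "a = 0 \<and> b = 0")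
  case True
  interpret prob_space M by fact
  show ?thesis using True by (simp add: prob_space)
next
  case False
  interpret prob_space M by fact
  define \<sigma> where "\<sigma> = sqrt (a\<^sup>2 + b\<^sup>2)"
  have "a\<^sup>2 + b\<^sup>2 > 0" using False by (auto simp: sum_power2_gt_zero_iff)
  then have \<sigma>: "\<sigma> > 0" "\<sigma>\<^sup>2 = a\<^sup>2 + b\<^sup>2" unfolding \<sigma>_def by simp_all
  let ?L = "\<lambda>\<omega>. a * X \<omega> + b * W \<omega>"
  have "distributed M lborel ?L (normal_density 0 \<sigma>)"
    using gaussian_pair_0_distributed[OF XW] False unfolding \<sigma>_def by auto
  then have "distributed M lborel (\<lambda>\<omega>. (?L \<omega> - 0) / \<sigma>) std_normal_density"
    using normal_standard_normal_convert[OF \<sigma>(1)] by simp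
  then have D: "distributed M lborel (\<lambda>\<omega>. ?L \<omega> / \<sigma>) std_normal_density" by simp
  have "(CLINT \<omega>|M. iexp (?L \<omega>)) = (CLINT \<omega>|M. iexp (\<sigma> * (?L \<omega> / \<sigma>)))"
    using \<sigma> by simp
  also have "\<dots> = char std_normal_distribution \<sigma>"
    unfolding char_def by (rule integral_distributed_std_normal[OF D]) simp
  also have "\<dots> = exp (-(a\<^sup>2 + b\<^sup>2) / 2)"
    by (simp only: char_std_normal_distribution \<sigma>(2))
  finally show ?thesis .
qed

lemma integral_weighted_indicator_std_normal:
  fixes h V :: "'a \<Rightarrow> real"
  assumes M: "prob_space M"
    and [measurable]: "h \<in> borel_measurable M" "V \<in> borel_measurable M" "A \<in> sets borel"
    and h_nonneg: "\<And>\<omega>. \<omega> \<in> space M \<Longrightarrow> 0 \<le> h \<omega>"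
    and h_int: "integrable M h" and h_1: "(\<integral>\<omega>. h \<omega> \<partial>M) = 1"
    and char_h: "\<And>t. (CLINT \<omega>|M. h \<omega> *\<^sub>R iexp (t * V \<omega>)) = exp (- (t\<^sup>2) / 2)"
  shows "(\<integral>\<omega>. h \<omega> * indicator A (V \<omega>) \<partial>M) = measure std_normal_distribution A"
proof -
  interpret prob_space M by fact
  let ?D = "density M h"
  let ?Q = "distr ?D borel V"
  have "emeasure ?D (space ?D) = (\<integral>\<^sup>+\<omega>. h \<omega> \<partial>M)"
    by (subst emeasure_density) (auto intro!: nn_integral_cong)
  also have "\<dots> = ennreal (\<integral>\<omega>. h \<omega> \<partial>M)"
    using h_int h_nonneg by (intro nn_integral_eq_integral) (auto intro: AE_I2)
  finally have "emeasure ?D (space ?D) = ennreal (\<integral>\<omega>. h \<omega> \<partial>M)" .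
  then have "prob_space ?D"
    using h_1 by (intro prob_spaceI) simp
  then have "real_distribution ?Q"
    by (simp add: real_distribution_def real_distribution_axioms_def prob_space.prob_space_distr)
  moreover have "char ?Q = char std_normal_distribution"
  proof
    fix t
    have "char ?Q t = (CLINT \<omega>|?D. iexp (t * V \<omega>))"
      unfolding char_def by (subst integral_distr) auto
    also have "\<dots> = (CLINT \<omega>|M. h \<omega> *\<^sub>R iexp (t * V \<omega>))"
      using h_nonneg by (subst integral_density) auto
    finally show "char ?Q t = char std_normal_distribution t"
      using char_h by (simp add: char_std_normal_distribution)
  qed
  ultimately have Q: "?Q = std_normal_distribution"
    using real_dist_normal_dist by (intro Levy_uniqueness) auto
  have "(\<integral>\<omega>. h \<omega> * indicator A (V \<omega>) \<partial>M) = (\<integral>\<omega>. indicator A (V \<omega>) \<partial>?D)"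
    using h_nonneg by (subst integral_density) auto
  also have "\<dots> = (\<integral>x. indicator A x \<partial>?Q)"
    by (subst integral_distr) auto
  finally show ?thesis
    unfolding Q by simp
qed

lemma integral_iexp_cos_gaussian_pair_0:
  assumes M: "prob_space M" and XW: "gaussian_pair M 0 X W"
  shows "(CLINT \<omega>|M. iexp (s * X \<omega>) * complex_of_real (cos (t * W \<omega> - \<theta>))) =
           complex_of_real (exp (-(s\<^sup>2 + t\<^sup>2) / 2) * cos \<theta>)"
proof -
  interpret prob_space M by fact
  note [measurable] = gaussian_pair_measurable[OF XW]
  have cos_eq: "complex_of_real (cos x) = (iexp x + iexp (- x)) / 2" for x
    by (simp add: cos_exp_eq cos_of_real[symmetric] algebra_simps)
  have split: "iexp (s * X \<omega>) * complex_of_real (cos (t * W \<omega> - \<theta>)) =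
      (iexp (- \<theta>) * iexp (s * X \<omega> + t * W \<omega>) + iexp \<theta> * iexp (s * X \<omega> + (- t) * W \<omega>)) / 2" for \<omega>
  proof -
    have "iexp (s * X \<omega>) * iexp (t * W \<omega> - \<theta>) = iexp (- \<theta>) * iexp (s * X \<omega> + t * W \<omega>)"
         "iexp (s * X \<omega>) * iexp (- (t * W \<omega> - \<theta>)) = iexp \<theta> * iexp (s * X \<omega> + (- t) * W \<omega>)"
      unfolding mult_exp_exp by (simp_all add: algebra_simps)
    then show ?thesis
      unfolding cos_eq by (simp add: distrib_left add_divide_distrib)
  qed
  have int: "integrable M (\<lambda>\<omega>. c * iexp (a * X \<omega> + b * W \<omega>))" for a b c
    by (intro integrable_mult_right integrable_const_bound[where B=1]) (auto simp: norm_exp_i_times)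
  have "(CLINT \<omega>|M. iexp (s * X \<omega>) * complex_of_real (cos (t * W \<omega> - \<theta>))) =
      (iexp (- \<theta>) * (CLINT \<omega>|M. iexp (s * X \<omega> + t * W \<omega>)) +
       iexp \<theta> * (CLINT \<omega>|M. iexp (s * X \<omega> + (- t) * W \<omega>))) / 2"
    unfolding split
    by (simp only: integral_divide_zero Bochner_Integration.integral_add[OF int int] integral_mult_right_zero)
  also have "\<dots> = (iexp (- \<theta>) + iexp \<theta>) / 2 * exp (-(s\<^sup>2 + t\<^sup>2) / 2)"
    by (simp only: char_gaussian_pair_0[OF M XW] power2_minus) (simp add: algebra_simps add_divide_distrib)
  finally show ?thesis
    by (simp add: cos_eq[of \<theta>] algebra_simps)
qed

lemma integral_cos_weighted_iexp_gaussian_pair_0: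
  assumes M: "prob_space M" and XW: "gaussian_pair M 0 X W"
  shows "(CLINT \<omega>|M. (2 + cos (t * W \<omega> - \<theta>)) *\<^sub>R iexp (s * X \<omega>)) =
           complex_of_real ((2 + exp (-(t\<^sup>2) / 2) * cos \<theta>) * exp (-(s\<^sup>2) / 2))"
proof -
  interpret prob_space M by fact
  note [measurable] = gaussian_pair_measurable[OF XW]
  have "integrable M (\<lambda>\<omega>. iexp (s * X \<omega>))"
    and "integrable M (\<lambda>\<omega>. iexp (s * X \<omega>) * complex_of_real (cos (t * W \<omega> - \<theta>)))"
    by (auto intro!: integrable_const_bound[where B=1] simp: norm_mult norm_exp_i_times)
  then have "(CLINT \<omega>|M. (2 + cos (t * W \<omega> - \<theta>)) *\<^sub>R iexp (s * X \<omega>)) =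
      2 * (CLINT \<omega>|M. iexp (s * X \<omega> + 0 * W \<omega>)) +
      (CLINT \<omega>|M. iexp (s * X \<omega>) * complex_of_real (cos (t * W \<omega> - \<theta>)))"
    by (simp add: scaleR_conv_of_real algebra_simps)
  also have "\<dots> = complex_of_real (2 * exp (-(s\<^sup>2) / 2) + exp (-(s\<^sup>2 + t\<^sup>2) / 2) * cos \<theta>)"
    unfolding char_gaussian_pair_0[OF M XW] integral_iexp_cos_gaussian_pair_0[OF M XW] by simp
  also have "exp (-(s\<^sup>2 + t\<^sup>2) / 2) = exp (-(s\<^sup>2) / 2) * exp (-(t\<^sup>2) / 2)"
    by (simp add: exp_add[symmetric] add_divide_distrib)
  finally show ?thesis
    by (simp add: algebra_simps)
qed

lemma integral_indicator_cos_gaussian_pair_0: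
  assumes M: "prob_space M" and XW: "gaussian_pair M 0 X W" and [measurable]: "A \<in> sets borel"
  shows "(\<integral>\<omega>. indicator A (X \<omega>) * cos (t * W \<omega> - \<theta>) \<partial>M) =
           measure std_normal_distribution A * exp (-(t\<^sup>2) / 2) * cos \<theta>"
proof -
  interpret prob_space M by fact
  note [measurable] = gaussian_pair_measurable[OF XW]
  txt \<open>Reweighting by the density \<open>h\<close> leaves the characteristic function of \<open>X\<close> unchanged,
    so \<open>X\<close> is still standard normal under it.\<close>
  define k where "k = 2 + exp (-(t\<^sup>2) / 2) * cos \<theta>"
  have "\<bar>exp (-(t\<^sup>2) / 2) * cos \<theta>\<bar> \<le> 1"
    by (simp add: abs_mult mult_le_one)
  then have k: "k \<ge> 1" unfolding k_def by linarith
  define h where "h \<omega> = (2 + cos (t * W \<omega> - \<theta>)) / k" for \<omega>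
  have [measurable]: "h \<in> borel_measurable M" unfolding h_def by measurable
  have int_cos: "integrable M (\<lambda>\<omega>. cos (t * W \<omega> - \<theta>))"
    and int_A: "integrable M (\<lambda>\<omega>. indicator A (X \<omega>) :: real)"
    and int_A_cos: "integrable M (\<lambda>\<omega>. indicator A (X \<omega>) * cos (t * W \<omega> - \<theta>))"
    by (auto intro!: integrable_const_bound[where B=1] simp: indicator_def)
  have "(\<integral>\<omega>. h \<omega> * indicator A (X \<omega>) \<partial>M) = measure std_normal_distribution A"
  proof (rule integral_weighted_indicator_std_normal[OF M])
    show "0 \<le> h \<omega>" for \<omega>
      using k cos_ge_minus_one[of "t * W \<omega> - \<theta>"] unfolding h_def
      by (intro divide_nonneg_nonneg) linarith+
    show "integrable M h" unfolding h_def using int_cos by auto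
    show "(CLINT \<omega>|M. h \<omega> *\<^sub>R iexp (s * X \<omega>)) = exp (- (s\<^sup>2) / 2)" for s
    proof -
      have "h \<omega> *\<^sub>R iexp (s * X \<omega>) = (1 / k) *\<^sub>R ((2 + cos (t * W \<omega> - \<theta>)) *\<^sub>R iexp (s * X \<omega>))"
        for \<omega> by (simp add: h_def)
      then have "(CLINT \<omega>|M. h \<omega> *\<^sub>R iexp (s * X \<omega>)) =
          (1 / k) *\<^sub>R (CLINT \<omega>|M. (2 + cos (t * W \<omega> - \<theta>)) *\<^sub>R iexp (s * X \<omega>))"
        by (simp only: integral_scaleR_right)
      also have "\<dots> = exp (- (s\<^sup>2) / 2)"
        using k unfolding integral_cos_weighted_iexp_gaussian_pair_0[OF M XW] k_def[symmetric]
        by (simp add: scaleR_conv_of_real)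
      finally show ?thesis .
    qed
    show "(\<integral>\<omega>. h \<omega> \<partial>M) = 1"
      using integral_iexp_cos_gaussian_pair_0[OF M XW, of 0 t \<theta>] int_cos k
      by (simp add: h_def integral_divide_zero prob_space k_def del: of_real_mult
          add: of_real_mult[symmetric])
  qed simp_all
  moreover have "(\<integral>\<omega>. h \<omega> * indicator A (X \<omega>) \<partial>M) =
      (2 * (\<integral>\<omega>. indicator A (X \<omega>) \<partial>M) + (\<integral>\<omega>. indicator A (X \<omega>) * cos (t * W \<omega> - \<theta>) \<partial>M)) / k"
    using int_A int_A_cos
    by (simp add: h_def algebra_simps add_divide_distrib integral_divide_zero)
  moreover have "(\<integral>\<omega>. indicator A (X \<omega>) \<partial>M) = measure std_normal_distribution A"
    by (rule integral_indicator_distributed_std_normal[OF gaussian_pair_std_normal(1)[OF XW]]) simp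
  ultimately show ?thesis
    using k by (simp add: k_def field_simps)
qed

lemma integral_indicator_iexp_gaussian_pair_0:
  assumes M: "prob_space M" and XW: "gaussian_pair M 0 X W" and A[measurable]: "A \<in> sets borel"
  shows "(CLINT \<omega>|M. indicator A (X \<omega>) *\<^sub>R iexp (t * W \<omega>)) =
           complex_of_real (measure std_normal_distribution A * exp (-(t\<^sup>2) / 2))"
proof -
  interpret prob_space M by fact
  note [measurable] = gaussian_pair_measurable[OF XW]
  have int: "integrable M (\<lambda>\<omega>. complex_of_real (indicator A (X \<omega>) * cos (t * W \<omega> - \<theta>)))" for \<theta>
    by (intro integrable_of_real integrable_const_bound[where B=1]) (auto simp: indicator_def)
  have iexp_eq: "iexp x = complex_of_real (cos x) + \<i> * complex_of_real (sin x)" for x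
    by (simp add: cis_conv_exp[symmetric] complex_eq_iff)
  have "indicator A (X \<omega>) *\<^sub>R iexp (t * W \<omega>) =
      complex_of_real (indicator A (X \<omega>) * cos (t * W \<omega> - 0)) +
      \<i> * complex_of_real (indicator A (X \<omega>) * cos (t * W \<omega> - pi/2))" for \<omega>
    by (simp only: iexp_eq) (simp add: cos_diff scaleR_conv_of_real algebra_simps)
  then have "(CLINT \<omega>|M. indicator A (X \<omega>) *\<^sub>R iexp (t * W \<omega>)) =
      complex_of_real (\<integral>\<omega>. indicator A (X \<omega>) * cos (t * W \<omega> - 0) \<partial>M) +
      \<i> * complex_of_real (\<integral>\<omega>. indicator A (X \<omega>) * cos (t * W \<omega> - pi/2) \<partial>M)"
    by (simp only: Bochner_Integration.integral_add[OF int integrable_mult_right[OF int]]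
        integral_mult_right_zero integral_complex_of_real)
  then show ?thesis
    by (simp only: integral_indicator_cos_gaussian_pair_0[OF M XW A]) simp
qed

lemma integral_indicator_indicator_gaussian_pair_0:
  assumes M: "prob_space M" and XW: "gaussian_pair M 0 X W"
    and A[measurable]: "A \<in> sets borel" and [measurable]: "B \<in> sets borel"
  shows "(\<integral>\<omega>. indicator A (X \<omega>) * indicator B (W \<omega>) \<partial>M) =
           measure std_normal_distribution A * measure std_normal_distribution B"
proof -
  interpret prob_space M by fact
  note [measurable] = gaussian_pair_measurable[OF XW]
  define p where "p = measure std_normal_distribution A"
  have E_A: "(\<integral>\<omega>. indicator A (X \<omega>) \<partial>M) = p"
    unfolding p_def
    by (rule integral_indicator_distributed_std_normal[OF gaussian_pair_std_normal(1)[OF XW]]) simp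
  have int_A: "integrable M (\<lambda>\<omega>. indicator A (X \<omega>) :: real)"
    and int_AB: "integrable M (\<lambda>\<omega>. indicator A (X \<omega>) * indicator B (W \<omega>) :: real)"
    by (auto intro!: integrable_const_bound[where B=1] simp: indicator_def)
  show ?thesis
  proof (cases "p = 0")
    case True
    have "(\<integral>\<omega>. indicator A (X \<omega>) * indicator B (W \<omega>) \<partial>M) \<le> (\<integral>\<omega>. indicator A (X \<omega>) \<partial>M :: real)"
      using int_A int_AB by (intro integral_mono) (auto simp: indicator_def)
    moreover have "0 \<le> (\<integral>\<omega>. indicator A (X \<omega>) * indicator B (W \<omega>) \<partial>M :: real)"
      by (intro Bochner_Integration.integral_nonneg) auto
    ultimately show ?thesis
      using True E_A unfolding p_def by simp
  next
    case False
    then have p: "p > 0"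
      unfolding p_def using measure_nonneg[of std_normal_distribution A] by linarith
    have "(\<integral>\<omega>. indicator A (X \<omega>) / p * indicator B (W \<omega>) \<partial>M) = measure std_normal_distribution B"
    proof (rule integral_weighted_indicator_std_normal[OF M])
      show "(CLINT \<omega>|M. (indicator A (X \<omega>) / p) *\<^sub>R iexp (t * W \<omega>)) = exp (- (t\<^sup>2) / 2)" for t
      proof -
        have "(indicator A (X \<omega>) / p) *\<^sub>R iexp (t * W \<omega>) =
            (1 / p) *\<^sub>R (indicator A (X \<omega>) *\<^sub>R iexp (t * W \<omega>))" for \<omega>
          by simp
        then have "(CLINT \<omega>|M. (indicator A (X \<omega>) / p) *\<^sub>R iexp (t * W \<omega>)) =
            (1 / p) *\<^sub>R (CLINT \<omega>|M. indicator A (X \<omega>) *\<^sub>R iexp (t * W \<omega>))"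
          by (simp only: integral_scaleR_right)
        also have "\<dots> = exp (- (t\<^sup>2) / 2)"
          using p unfolding integral_indicator_iexp_gaussian_pair_0[OF M XW A] p_def[symmetric]
          by (simp add: scaleR_conv_of_real)
        finally show ?thesis .
      qed
    qed (use p int_A E_A in \<open>auto simp: integral_divide_zero\<close>)
    then show ?thesis
      using p by (simp add: integral_divide_zero p_def field_simps)
  qed
qed

lemma distr_gaussian_pair_0:
  assumes M: "prob_space M" and XW: "gaussian_pair M 0 X W"
  shows "distr M (borel \<Otimes>\<^sub>M borel) (\<lambda>\<omega>. (X \<omega>, W \<omega>)) =
           std_normal_distribution \<Otimes>\<^sub>M std_normal_distribution"
proof (rule pair_measure_eqI[symmetric])
  interpret prob_space M by fact
  note [measurable] = gaussian_pair_measurable[OF XW]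
  fix A B assume "A \<in> sets std_normal_distribution" "B \<in> sets std_normal_distribution"
  then have [measurable]: "A \<in> sets borel" "B \<in> sets borel" by auto
  have "emeasure (distr M (borel \<Otimes>\<^sub>M borel) (\<lambda>\<omega>. (X \<omega>, W \<omega>))) (A \<times> B) =
      measure M ((\<lambda>\<omega>. (X \<omega>, W \<omega>)) -` (A \<times> B) \<inter> space M)"
    by (simp add: emeasure_distr emeasure_eq_measure)
  also have "measure M ((\<lambda>\<omega>. (X \<omega>, W \<omega>)) -` (A \<times> B) \<inter> space M) =
      (\<integral>\<omega>. indicator ((\<lambda>\<omega>. (X \<omega>, W \<omega>)) -` (A \<times> B) \<inter> space M) \<omega> \<partial>M)"
    by simp
  also have "\<dots> = (\<integral>\<omega>. indicator A (X \<omega>) * indicator B (W \<omega>) \<partial>M)"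
    by (intro Bochner_Integration.integral_cong) (auto simp: indicator_def)
  also have "\<dots> = measure std_normal_distribution A * measure std_normal_distribution B"
    by (rule integral_indicator_indicator_gaussian_pair_0[OF M XW]) simp_all
  finally show "emeasure std_normal_distribution A * emeasure std_normal_distribution B =
      emeasure (distr M (borel \<Otimes>\<^sub>M borel) (\<lambda>\<omega>. (X \<omega>, W \<omega>))) (A \<times> B)"
    by (simp add: std_normal.emeasure_eq_measure ennreal_mult'')
qed (simp_all add: std_normal.sigma_finite_measure_axioms cong: sets_pair_measure_cong)

lemma integral_gaussian_pair_0:
  fixes f :: "real \<times> real \<Rightarrow> real"
  assumes M: "prob_space M" and XW: "gaussian_pair M 0 X W"
    and [measurable]: "f \<in> borel_measurable (borel \<Otimes>\<^sub>M borel)" and f: "\<And>z. \<bar>f z\<bar> \<le> C"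
  shows "(\<integral>\<omega>. f (X \<omega>, W \<omega>) \<partial>M) =
           (\<integral>x. (\<integral>w. f (x, w) \<partial>std_normal_distribution) \<partial>std_normal_distribution)"
proof -
  interpret std_normal2: pair_prob_space std_normal_distribution std_normal_distribution ..
  note [measurable] = gaussian_pair_measurable[OF XW]
  have "(\<integral>\<omega>. f (X \<omega>, W \<omega>) \<partial>M) = (\<integral>z. f z \<partial>distr M (borel \<Otimes>\<^sub>M borel) (\<lambda>\<omega>. (X \<omega>, W \<omega>)))"
    by (rule integral_distr[symmetric]) auto
  also have "\<dots> = (\<integral>x. (\<integral>w. f (x, w) \<partial>std_normal_distribution) \<partial>std_normal_distribution)"
    unfolding distr_gaussian_pair_0[OF M XW] using f
    by (intro std_normal2.integral_fst'[symmetric] std_normal2.integrable_const_bound[where B=C]) auto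
  finally show ?thesis .
qed

section \<open>The conditional expectation of \<open>Phi Y\<close> given \<open>X\<close>\<close>

text \<open>For a Gaussian pair \<open>(X, Y)\<close> with correlation \<open>r\<close> we have \<open>Y = r X + sqrt (1 - r\<^sup>2) W\<close>
  with \<open>W\<close> standard normal and independent of \<open>X\<close>; hence \<open>E[Phi Y | X = x] = cond_exp_Phi r x\<close>.\<close>

definition cond_exp_Phi :: "real \<Rightarrow> real \<Rightarrow> real" where
  "cond_exp_Phi r x = (\<integral>w. Phi (r * x + sqrt (1 - r\<^sup>2) * w) \<partial>std_normal_distribution)"

lemma borel_measurable_cond_exp_Phi [measurable]: "cond_exp_Phi r \<in> borel_measurable borel"
  unfolding cond_exp_Phi_def[abs_def] by measurable

lemma abs_cond_exp_Phi_le_1: "\<bar>cond_exp_Phi r x\<bar> \<le> 1"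
proof -
  have "\<bar>cond_exp_Phi r x\<bar> \<le> (\<integral>w. \<bar>Phi (r * x + sqrt (1 - r\<^sup>2) * w)\<bar> \<partial>std_normal_distribution)"
    unfolding cond_exp_Phi_def by (rule integral_abs_bound)
  also have "\<dots> \<le> (\<integral>w. 1 \<partial>std_normal_distribution)"
    by (intro integral_mono std_normal.integrable_const_bound[where B=1]) (auto simp: abs_Phi_le_1)
  finally show ?thesis by (simp add: measure_std_normal_UNIV)
qed

lemma cond_exp_Phi_uminus: "cond_exp_Phi r (- x) = cond_exp_Phi (- r) x"
  by (simp add: cond_exp_Phi_def)

lemma gaussian_pair_decorrelate:
  assumes XY: "gaussian_pair M r X Y" and r: "r\<^sup>2 < 1"
  shows "gaussian_pair M 0 X (\<lambda>\<omega>. (Y \<omega> - r * X \<omega>) / sqrt (1 - r\<^sup>2))"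
  unfolding gaussian_pair_def
proof (intro allI)
  fix a b :: real
  define s where "s = sqrt (1 - r\<^sup>2)"
  have s: "s > 0" "s\<^sup>2 = 1 - r\<^sup>2" unfolding s_def using r by simp_all
  define a' b' where "a' = a - b * r / s" and "b' = b / s"
  have "a'\<^sup>2 + 2*a'*b'*r + b'\<^sup>2 = a\<^sup>2 + b\<^sup>2 * (1 - r\<^sup>2) / s\<^sup>2"
    unfolding a'_def b'_def using s by (simp add: field_simps power2_eq_square)
  then have v: "a'\<^sup>2 + 2*a'*b'*r + b'\<^sup>2 = a\<^sup>2 + b\<^sup>2"
    using s r by simp
  have "(\<lambda>\<omega>. a * X \<omega> + b * ((Y \<omega> - r * X \<omega>) / s)) = (\<lambda>\<omega>. a' * X \<omega> + b' * Y \<omega>)"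
    unfolding a'_def b'_def using s by (auto simp: field_simps)
  then show "if a\<^sup>2 + 2*a*b*0 + b\<^sup>2 = 0 then AE \<omega> in M. a * X \<omega> + b * ((Y \<omega> - r * X \<omega>) / s) = 0
      else distributed M lborel (\<lambda>\<omega>. a * X \<omega> + b * ((Y \<omega> - r * X \<omega>) / s))
             (normal_density 0 (sqrt (a\<^sup>2 + 2*a*b*0 + b\<^sup>2)))"
    using gaussian_pair_distributed[OF XY, of a' b'] v by (simp add: sum_power2_eq_zero_iff)
qed

lemma integral_indicator_Phi_gaussian_pair:
  assumes M: "prob_space M" and XY: "gaussian_pair M r X Y" and r: "r\<^sup>2 \<le> 1"
    and [measurable]: "B \<in> sets borel"
  shows "(\<integral>\<omega>. indicator B (X \<omega>) * Phi (Y \<omega>) \<partial>M) =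
           (\<integral>\<omega>. indicator B (X \<omega>) * cond_exp_Phi r (X \<omega>) \<partial>M)"
proof -
  have "(\<integral>\<omega>. indicator B (X \<omega>) * Phi (Y \<omega>) \<partial>M) =
      (\<integral>x. indicator B x * cond_exp_Phi r x \<partial>std_normal_distribution)"
  proof (cases "r\<^sup>2 = 1")
    case True
    interpret prob_space M by fact
    note [measurable] = gaussian_pair_measurable[OF XY]
    have "AE \<omega> in M. r * X \<omega> + (-1) * Y \<omega> = 0"
      using True by (intro gaussian_pair_AE_zero[OF XY]) (simp add: power2_eq_square)
    then have "(\<integral>\<omega>. indicator B (X \<omega>) * Phi (Y \<omega>) \<partial>M) = (\<integral>\<omega>. indicator B (X \<omega>) * Phi (r * X \<omega>) \<partial>M)"
      by (intro integral_cong_AE) auto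
    also have "\<dots> = (\<integral>x. indicator B x * Phi (r * x) \<partial>std_normal_distribution)"
      by (rule integral_distributed_std_normal[OF gaussian_pair_std_normal(1)[OF XY]]) measurable
    also have "\<dots> = (\<integral>x. indicator B x * cond_exp_Phi r x \<partial>std_normal_distribution)"
      using True by (simp add: cond_exp_Phi_def measure_std_normal_UNIV)
    finally show ?thesis .
  next
    case False
    define s where "s = sqrt (1 - r\<^sup>2)"
    have "s > 0" unfolding s_def using r False by simp
    define W where "W \<omega> = (Y \<omega> - r * X \<omega>) / s" for \<omega>
    have XW: "gaussian_pair M 0 X W"
      unfolding W_def[abs_def] s_def using r False by (intro gaussian_pair_decorrelate[OF XY]) simp
    have "(\<integral>\<omega>. indicator B (X \<omega>) * Phi (Y \<omega>) \<partial>M) =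
        (\<integral>\<omega>. (\<lambda>(x, w). indicator B x * Phi (r * x + s * w)) (X \<omega>, W \<omega>) \<partial>M)"
      using \<open>s > 0\<close> by (simp add: W_def)
    also have "\<dots> = (\<integral>x. (\<integral>w. indicator B x * Phi (r * x + s * w) \<partial>std_normal_distribution) \<partial>std_normal_distribution)"
      by (subst integral_gaussian_pair_0[OF M XW, where C=1]) (auto simp: indicator_def abs_Phi_le_1)
    also have "\<dots> = (\<integral>x. indicator B x * cond_exp_Phi r x \<partial>std_normal_distribution)"
      by (simp add: cond_exp_Phi_def s_def)
    finally show ?thesis .
  qed
  also have "\<dots> = (\<integral>\<omega>. indicator B (X \<omega>) * cond_exp_Phi r (X \<omega>) \<partial>M)"
    by (rule integral_distributed_std_normal[OF gaussian_pair_std_normal(1)[OF XY], symmetric])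
      measurable
  finally show ?thesis .
qed

lemma tendsto_cond_exp_Phi_at_top:
  "(cond_exp_Phi r \<longlongrightarrow> (if 0 < r then 1 else if r < 0 then 0 else Phi_mean)) at_top"
proof -
  define s where "s = sqrt (1 - r\<^sup>2)"
  define l where "l w = (if 0 < r then 1 else if r < 0 then 0 else Phi (s * w))" for w
  have [measurable]: "l \<in> borel_measurable borel" unfolding l_def by measurable
  have lim: "((\<lambda>x. Phi (r * x + s * w)) \<longlongrightarrow> l w) at_top" for w
  proof -
    have "filterlim (\<lambda>x. s * w + r * x) at_top at_top" if "0 < r"
      using that by (intro filterlim_tendsto_add_at_top[OF tendsto_const]
          filterlim_tendsto_pos_mult_at_top[OF tendsto_const _ filterlim_ident])
    moreover have "filterlim (\<lambda>x. - s * w + (- r) * x) at_top at_top" if "r < 0"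
      using that by (intro filterlim_tendsto_add_at_top[OF tendsto_const]
          filterlim_tendsto_pos_mult_at_top[OF tendsto_const _ filterlim_ident]) simp
    ultimately show ?thesis
      unfolding l_def
      by (auto intro: filterlim_compose[OF Phi_at_top] filterlim_compose[OF Phi_at_bot]
          simp: add.commute filterlim_uminus_at_bot algebra_simps)
  qed
  have "((\<lambda>x. \<integral>w. Phi (r * x + s * w) \<partial>std_normal_distribution) \<longlongrightarrow>
      (\<integral>w. l w \<partial>std_normal_distribution)) at_top"
    by (rule integral_dominated_convergence_at_top[where w="\<lambda>_. 1"])
      (auto intro!: AE_I2 lim simp: abs_Phi_le_1)
  moreover have "(\<integral>w. l w \<partial>std_normal_distribution) = (if 0 < r then 1 else if r < 0 then 0 else Phi_mean)"
    by (simp add: l_def s_def Phi_mean_def measure_std_normal_UNIV)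
  ultimately show ?thesis
    unfolding cond_exp_Phi_def[abs_def] s_def by simp
qed

lemma tendsto_cond_exp_Phi_at_bot:
  "(cond_exp_Phi r \<longlongrightarrow> (if 0 < r then 0 else if r < 0 then 1 else Phi_mean)) at_bot"
  unfolding filterlim_at_bot_mirror cond_exp_Phi_uminus
  using tendsto_cond_exp_Phi_at_top[of "- r"] by (simp split: if_splits)

lemma AE_Phi_sum_const_imp_AE_cond_exp_sum_const:
  assumes M: "prob_space M" and XY: "gaussian_pair M r\<^sub>1 X Y" and XZ: "gaussian_pair M r\<^sub>2 X Z"
    and r: "r\<^sub>1\<^sup>2 \<le> 1" "r\<^sub>2\<^sup>2 \<le> 1"
    and sum: "AE \<omega> in M. Phi (X \<omega>) + Phi (Y \<omega>) + Phi (Z \<omega>) = c"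
  shows "AE x in lborel. Phi x + cond_exp_Phi r\<^sub>1 x + cond_exp_Phi r\<^sub>2 x = c"
proof -
  interpret prob_space M by fact
  note X_normal = gaussian_pair_std_normal(1)[OF XY]
  note [measurable] = gaussian_pair_measurable[OF XY] gaussian_pair_measurable(2)[OF XZ]
  define F where "F x = Phi x + cond_exp_Phi r\<^sub>1 x + cond_exp_Phi r\<^sub>2 x - c" for x
  have [measurable]: "F \<in> borel_measurable borel" unfolding F_def by measurable
  have F_bound: "\<bar>F x\<bar> \<le> 3 + \<bar>c\<bar>" for x
    using abs_Phi_le_1[of x] abs_cond_exp_Phi_le_1[of r\<^sub>1 x] abs_cond_exp_Phi_le_1[of r\<^sub>2 x]
    unfolding F_def by linarith
  have "(\<integral>x\<in>B. F x \<partial>std_normal_distribution) = 0" if [measurable]: "B \<in> sets borel" for B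
  proof -
    have int: "integrable M (\<lambda>\<omega>. indicator B (X \<omega>) * g \<omega>)"
      if [measurable]: "g \<in> borel_measurable M" and "\<And>\<omega>. \<bar>g \<omega>\<bar> \<le> C" for g :: "'a \<Rightarrow> real" and C
      using that(2) by (intro integrable_const_bound[where B=C])
        (auto intro!: AE_I2 simp: indicator_def intro: order_trans[OF abs_ge_zero])
    have sum_bound: "\<bar>Phi (X \<omega>) + Phi (Y \<omega>) + Phi (Z \<omega>) - c\<bar> \<le> 3 + \<bar>c\<bar>" for \<omega>
      using abs_Phi_le_1[of "X \<omega>"] abs_Phi_le_1[of "Y \<omega>"] abs_Phi_le_1[of "Z \<omega>"] by linarith
    have "integrable M (\<lambda>\<omega>. indicator B (X \<omega>) * (Phi (X \<omega>) + Phi (Y \<omega>) + Phi (Z \<omega>) - c))"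
      by (rule int, measurable, rule sum_bound)
    moreover have "integrable M (\<lambda>\<omega>. indicator B (X \<omega>) * Phi (Y \<omega>))"
      "integrable M (\<lambda>\<omega>. indicator B (X \<omega>) * Phi (Z \<omega>))"
      "integrable M (\<lambda>\<omega>. indicator B (X \<omega>) * cond_exp_Phi r\<^sub>1 (X \<omega>))"
      "integrable M (\<lambda>\<omega>. indicator B (X \<omega>) * cond_exp_Phi r\<^sub>2 (X \<omega>))"
      by (rule int, measurable, rule abs_Phi_le_1 abs_cond_exp_Phi_le_1)+
    moreover have "(\<integral>\<omega>. indicator B (X \<omega>) * (Phi (X \<omega>) + Phi (Y \<omega>) + Phi (Z \<omega>) - c) \<partial>M) = 0"
      using sum by (subst integral_cong_AE[where g="\<lambda>_. 0"]) auto
    moreover have "(\<integral>x\<in>B. F x \<partial>std_normal_distribution) =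
      (\<integral>\<omega>. indicator B (X \<omega>) * (Phi (X \<omega>) + Phi (Y \<omega>) + Phi (Z \<omega>) - c)
        - (indicator B (X \<omega>) * Phi (Y \<omega>) - indicator B (X \<omega>) * cond_exp_Phi r\<^sub>1 (X \<omega>))
        - (indicator B (X \<omega>) * Phi (Z \<omega>) - indicator B (X \<omega>) * cond_exp_Phi r\<^sub>2 (X \<omega>)) \<partial>M)"
      using integral_distributed_std_normal[OF X_normal, of "\<lambda>x. indicator B x * F x"]
      by (simp add: set_lebesgue_integral_def F_def algebra_simps)
    ultimately show ?thesis
      by (simp add: integral_indicator_Phi_gaussian_pair[OF M XY r(1)]
          integral_indicator_Phi_gaussian_pair[OF M XZ r(2)])
  qed
  moreover have "integrable std_normal_distribution F"
    using F_bound by (intro std_normal.integrable_const_bound[where B="3 + \<bar>c\<bar>"]) auto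
  ultimately have "AE x in std_normal_distribution. F x = 0"
    by (intro density_unique_real) auto
  then show ?thesis
    unfolding F_def by (intro AE_std_normal_imp_AE_lborel) auto
qed

lemma AE_Phi_sum_const_imp_one_corr_zero:
  assumes M: "prob_space M" and XY: "gaussian_pair M r\<^sub>1 X Y" and XZ: "gaussian_pair M r\<^sub>2 X Z"
    and r: "r\<^sub>1\<^sup>2 \<le> 1" "r\<^sub>2\<^sup>2 \<le> 1"
    and sum: "AE \<omega> in M. Phi (X \<omega>) + Phi (Y \<omega>) + Phi (Z \<omega>) = c"
  shows "(r\<^sub>1 = 0) \<noteq> (r\<^sub>2 = 0)"
proof -
  note cond_sum = AE_Phi_sum_const_imp_AE_cond_exp_sum_const[OF assms]
  define lim_top lim_bot where
    "lim_top \<rho> = (if 0 < \<rho> then 1 else if \<rho> < 0 then 0 else Phi_mean)" and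
    "lim_bot \<rho> = (if 0 < \<rho> then 0 else if \<rho> < 0 then 1 else Phi_mean)" for \<rho> :: real
  have "((\<lambda>x. Phi x + cond_exp_Phi r\<^sub>1 x + cond_exp_Phi r\<^sub>2 x) \<longlongrightarrow> 1 + lim_top r\<^sub>1 + lim_top r\<^sub>2) at_top"
    unfolding lim_top_def by (intro tendsto_intros Phi_at_top tendsto_cond_exp_Phi_at_top)
  then have top: "1 + lim_top r\<^sub>1 + lim_top r\<^sub>2 = c"
    by (rule tendsto_eq_if_frequently_eq[OF _ AE_lborel_imp_frequently_at_top[OF cond_sum]])
  have "((\<lambda>x. Phi x + cond_exp_Phi r\<^sub>1 x + cond_exp_Phi r\<^sub>2 x) \<longlongrightarrow> 0 + lim_bot r\<^sub>1 + lim_bot r\<^sub>2) at_bot"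
    unfolding lim_bot_def by (intro tendsto_intros Phi_at_bot tendsto_cond_exp_Phi_at_bot)
  then have bot: "0 + lim_bot r\<^sub>1 + lim_bot r\<^sub>2 = c"
    by (rule tendsto_eq_if_frequently_eq[OF _ AE_lborel_imp_frequently_at_bot[OF cond_sum]])
  from top bot show ?thesis
    unfolding lim_top_def lim_bot_def by (auto split: if_splits)
qed

section \<open>Gaussian vectors and correlation matrices\<close>

lemma sum_two_point_combination:
  fixes f :: "nat \<Rightarrow> 'b::comm_ring"
  assumes "i < n" "j < n" "i \<noteq> j"
  shows "(\<Sum>k<n. (if k = i then a else if k = j then b else 0) * f k) = a * f i + b * f j"
proof -
  have "(\<Sum>k<n. (if k = i then a else if k = j then b else 0) * f k) =
        (\<Sum>k<n. (if k = i then a * f i else 0) + (if k = j then b * f j else 0))"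
    using assms(3) by (intro sum.cong) auto
  also have "\<dots> = a * f i + b * f j"
    using assms by (simp add: sum.distrib)
  finally show ?thesis .
qed

lemma quadratic_form_two_point:
  fixes R :: "nat \<Rightarrow> nat \<Rightarrow> real" and a b :: real
  assumes ij: "i < n" "j < n" "i \<noteq> j" and R: "R i i = 1" "R j j = 1" "R j i = R i j"
  defines "c \<equiv> (\<lambda>k. if k = i then a else if k = j then b else 0)"
  shows "(\<Sum>k<n. \<Sum>l<n. c k * R k l * c l) = a\<^sup>2 + 2*a*b*R i j + b\<^sup>2"
proof -
  have "(\<Sum>k<n. \<Sum>l<n. c k * R k l * c l) = (\<Sum>k<n. c k * (a * R k i + b * R k j))"
    using sum_two_point_combination[OF ij, of a b "\<lambda>l. c k * R k l" for k]
    by (simp add: c_def algebra_simps)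
  also have "\<dots> = a * (a * R i i + b * R i j) + b * (a * R j i + b * R j j)"
    unfolding c_def by (rule sum_two_point_combination[OF ij])
  also have "\<dots> = a\<^sup>2 + 2*a*b*R i j + b\<^sup>2"
    using R by (simp add: power2_eq_square algebra_simps)
  finally show ?thesis .
qed

lemma gaussian_vector_pair:
  assumes X: "gaussian_vector M n X R" and R: "R \<in> corr_matrices n"
    and ij: "i < n" "j < n" "i \<noteq> j"
  shows "gaussian_pair M (R i j) (X i) (X j)"
  unfolding gaussian_pair_def
proof (intro allI)
  fix a b :: real
  define c where "c k = (if k = i then a else if k = j then b else 0)" for k
  have Q: "(\<Sum>k<n. \<Sum>l<n. c k * R k l * c l) = a\<^sup>2 + 2*a*b*R i j + b\<^sup>2"
    using R ij unfolding c_def[abs_def] corr_matrices_def by (intro quadratic_form_two_point) auto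
  have L: "(\<lambda>\<omega>. \<Sum>k<n. c k * X k \<omega>) = (\<lambda>\<omega>. a * X i \<omega> + b * X j \<omega>)"
    unfolding c_def by (intro ext sum_two_point_combination[OF ij])
  have "let v = (\<Sum>k<n. \<Sum>l<n. c k * R k l * c l); Y = (\<lambda>\<omega>. \<Sum>k<n. c k * X k \<omega>)
      in if v = 0 then AE \<omega> in M. Y \<omega> = 0 else distributed M lborel Y (normal_density 0 (sqrt v))"
    using X unfolding gaussian_vector_def by blast
  then show "if a\<^sup>2 + 2*a*b*R i j + b\<^sup>2 = 0 then AE \<omega> in M. a * X i \<omega> + b * X j \<omega> = 0
      else distributed M lborel (\<lambda>\<omega>. a * X i \<omega> + b * X j \<omega>)
             (normal_density 0 (sqrt (a\<^sup>2 + 2*a*b*R i j + b\<^sup>2)))"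
    unfolding Q L Let_def .
qed

lemma corr_matrices_entry_square_le_1:
  assumes R: "R \<in> corr_matrices n" and ij: "i < n" "j < n"
  shows "(R i j)\<^sup>2 \<le> 1"
proof (cases "i = j")
  case True
  then show ?thesis using R ij by (simp add: corr_matrices_def)
next
  case False
  define c where "c k = (if k = i then R i j else if k = j then -1 else 0)" for k
  have "(\<Sum>k<n. \<Sum>l<n. c k * R k l * c l) = (R i j)\<^sup>2 + 2*(R i j)*(-1)*R i j + (-1)\<^sup>2"
    using R ij False unfolding c_def[abs_def] corr_matrices_def by (intro quadratic_form_two_point) auto
  moreover have "0 \<le> (\<Sum>k<n. \<Sum>l<n. c k * R k l * c l)"
    using R unfolding corr_matrices_def by blast
  ultimately show ?thesis by (simp add: power2_eq_square)
qed

lemma gaussian_vector_std_normal: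
  assumes "gaussian_vector M n X R" "R \<in> corr_matrices n" "n \<ge> 2" "i < n"
  shows "distributed M lborel (X i) std_normal_density"
proof -
  define j where "j = (if i = 0 then 1 else 0 :: nat)"
  have "j < n" "i \<noteq> j" using assms(3,4) by (auto simp: j_def)
  then show ?thesis
    using gaussian_pair_std_normal(1)[OF gaussian_vector_pair] assms by blast
qed

lemma covar_Phi_std_normal:
  assumes X: "distributed M lborel X std_normal_density" and Y: "distributed M lborel Y std_normal_density"
  shows "covar M (\<lambda>\<omega>. Phi (X \<omega>)) (\<lambda>\<omega>. Phi (Y \<omega>)) =
           (\<integral>\<omega>. (Phi (X \<omega>) - Phi_mean) * (Phi (Y \<omega>) - Phi_mean) \<partial>M)"
proof -
  have "(\<integral>\<omega>. Phi (Z \<omega>) \<partial>M) = Phi_mean" if "distributed M lborel Z std_normal_density" for Z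
    unfolding Phi_mean_def by (rule integral_distributed_std_normal[OF that]) simp
  then show ?thesis
    unfolding covar_def using X Y by simp
qed

lemma covar_Phi_self_std_normal:
  assumes X: "distributed M lborel X std_normal_density"
  shows "covar M (\<lambda>\<omega>. Phi (X \<omega>)) (\<lambda>\<omega>. Phi (X \<omega>)) = Phi_var"
  unfolding covar_Phi_std_normal[OF X X] Phi_var_def power2_eq_square
  by (rule integral_distributed_std_normal[OF X]) simp

lemma integral_square_sum:
  fixes D :: "'i \<Rightarrow> 'a \<Rightarrow> real"
  assumes M: "prob_space M" and I: "finite I"
    and D: "\<And>i. i \<in> I \<Longrightarrow> D i \<in> borel_measurable M" "\<And>i \<omega>. i \<in> I \<Longrightarrow> \<bar>D i \<omega>\<bar> \<le> K"
  shows "(\<integral>\<omega>. (\<Sum>i\<in>I. y i * D i \<omega>)\<^sup>2 \<partial>M) =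
           (\<Sum>i\<in>I. \<Sum>j\<in>I. y i * y j * (\<integral>\<omega>. D i \<omega> * D j \<omega> \<partial>M))"
proof -
  interpret prob_space M by fact
  have int: "integrable M (\<lambda>\<omega>. D i \<omega> * D j \<omega>)" if "i \<in> I" "j \<in> I" for i j
  proof (rule integrable_const_bound[where B="K * K"])
    show "AE \<omega> in M. norm (D i \<omega> * D j \<omega>) \<le> K * K"
      using D(2)[OF that(1)] D(2)[OF that(2)]
      by (intro AE_I2) (auto simp: abs_mult intro!: mult_mono order_trans[OF abs_ge_zero])
    show "(\<lambda>\<omega>. D i \<omega> * D j \<omega>) \<in> borel_measurable M"
      using D(1)[OF that(1)] D(1)[OF that(2)] by measurable
  qed
  have "(\<integral>\<omega>. (\<Sum>i\<in>I. y i * D i \<omega>)\<^sup>2 \<partial>M) =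
      (\<integral>\<omega>. (\<Sum>i\<in>I. \<Sum>j\<in>I. y i * y j * (D i \<omega> * D j \<omega>)) \<partial>M)"
    by (simp add: power2_eq_square sum_product algebra_simps)
  also have "\<dots> = (\<Sum>i\<in>I. \<Sum>j\<in>I. y i * y j * (\<integral>\<omega>. D i \<omega> * D j \<omega> \<partial>M))"
    using int by (simp add: Bochner_Integration.integral_sum)
  finally show ?thesis .
qed

context
  fixes M :: "'a measure" and n :: nat and X :: "nat \<Rightarrow> 'a \<Rightarrow> real" and R
  assumes M: "prob_space M" and X: "gaussian_vector M n X R" and R: "R \<in> corr_matrices n"
    and n: "n \<ge> 2"
begin

lemma correl_matrix_Phi_eq:
  assumes "i < n" "j < n"
  shows "correl_matrix M n (\<lambda>i \<omega>. Phi (X i \<omega>)) i j =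
           (\<integral>\<omega>. (Phi (X i \<omega>) - Phi_mean) * (Phi (X j \<omega>) - Phi_mean) \<partial>M) / Phi_var"
proof -
  note X_normal = gaussian_vector_std_normal[OF X R n]
  show ?thesis
    using assms Phi_var_pos
    by (simp add: correl_matrix_def correl_def covar_Phi_self_std_normal X_normal
        covar_Phi_std_normal[OF X_normal X_normal])
qed

lemma quadratic_form_correl_matrix_Phi:
  "Phi_var * (\<Sum>i<n. \<Sum>j<n. x i * correl_matrix M n (\<lambda>i \<omega>. Phi (X i \<omega>)) i j * x j) =
     (\<integral>\<omega>. (\<Sum>i<n. x i * (Phi (X i \<omega>) - Phi_mean))\<^sup>2 \<partial>M)"
proof -
  have [measurable]: "X i \<in> borel_measurable M" if "i < n" for i
    using distributed_measurable[OF gaussian_vector_std_normal[OF X R n that]] by simp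
  have "(\<integral>\<omega>. (\<Sum>i<n. x i * (Phi (X i \<omega>) - Phi_mean))\<^sup>2 \<partial>M) =
      (\<Sum>i<n. \<Sum>j<n. x i * x j * (\<integral>\<omega>. (Phi (X i \<omega>) - Phi_mean) * (Phi (X j \<omega>) - Phi_mean) \<partial>M))"
    by (rule integral_square_sum[OF M, where K=1]) (auto simp: abs_Phi_minus_mean_le_1)
  then show ?thesis
    using Phi_var_pos
    by (simp add: correl_matrix_Phi_eq sum_distrib_left algebra_simps)
qed

lemma correl_matrix_Phi_in_corr_matrices:
  "correl_matrix M n (\<lambda>i \<omega>. Phi (X i \<omega>)) \<in> corr_matrices n"
  unfolding corr_matrices_def
proof (intro CollectI conjI allI impI)
  let ?S = "correl_matrix M n (\<lambda>i \<omega>. Phi (X i \<omega>))"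
  show "?S i j = 0" if "n \<le> i \<or> n \<le> j" for i j
    using that by (auto simp: correl_matrix_def)
  show "?S i j = ?S j i" if "i < n" "j < n" for i j
    using that by (simp add: correl_matrix_Phi_eq mult.commute)
  show "?S i i = 1" if "i < n" for i
  proof -
    note X_normal = gaussian_vector_std_normal[OF X R n that]
    show ?thesis
      using that Phi_var_pos covar_Phi_self_std_normal[OF X_normal]
      unfolding covar_Phi_std_normal[OF X_normal X_normal] by (simp add: correl_matrix_Phi_eq)
  qed
  show "0 \<le> (\<Sum>i<n. \<Sum>j<n. x i * ?S i j * x j)" for x
  proof -
    have "0 \<le> Phi_var * (\<Sum>i<n. \<Sum>j<n. x i * ?S i j * x j)"
      unfolding quadratic_form_correl_matrix_Phi by (rule Bochner_Integration.integral_nonneg) simp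
    then show ?thesis
      using Phi_var_pos by (simp add: zero_le_mult_iff)
  qed
qed

lemma AE_Phi_combination_const:
  assumes "(\<Sum>i<n. \<Sum>j<n. x i * correl_matrix M n (\<lambda>i \<omega>. Phi (X i \<omega>)) i j * x j) = 0"
  shows "AE \<omega> in M. (\<Sum>i<n. x i * Phi (X i \<omega>)) = (\<Sum>i<n. x i) * Phi_mean"
proof -
  interpret prob_space M by fact
  have [measurable]: "X i \<in> borel_measurable M" if "i < n" for i
    using distributed_measurable[OF gaussian_vector_std_normal[OF X R n that]] by simp
  define D where "D \<omega> = (\<Sum>i<n. x i * (Phi (X i \<omega>) - Phi_mean))" for \<omega>
  have [measurable]: "D \<in> borel_measurable M" unfolding D_def by measurable
  have "\<bar>D \<omega>\<bar> \<le> (\<Sum>i<n. \<bar>x i\<bar>)" for \<omega>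
    unfolding D_def using abs_Phi_minus_mean_le_1
    by (intro order_trans[OF sum_abs]) (auto intro!: sum_mono simp: abs_mult mult_left_le)
  then have "(D \<omega>)\<^sup>2 \<le> (\<Sum>i<n. \<bar>x i\<bar>)\<^sup>2" for \<omega>
    using power_mono[OF _ abs_ge_zero, of "D \<omega>" _ 2] by simp
  then have "integrable M (\<lambda>\<omega>. (D \<omega>)\<^sup>2)"
    by (intro integrable_const_bound[where B="(\<Sum>i<n. \<bar>x i\<bar>)\<^sup>2"]) auto
  moreover have "(\<integral>\<omega>. (D \<omega>)\<^sup>2 \<partial>M) = 0"
    using quadratic_form_correl_matrix_Phi[of x] assms unfolding D_def by simp
  ultimately have "AE \<omega> in M. (D \<omega>)\<^sup>2 = 0"
    by (subst (asm) integral_nonneg_eq_0_iff_AE) auto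
  then show ?thesis
    by eventually_elim (simp add: D_def algebra_simps sum_subtractf sum_distrib_left)
qed

end

lemma Rstar_set_subset_corr_matrices:
  assumes "n \<ge> 2"
  shows "Rstar_set TYPE('a) n \<subseteq> corr_matrices n"
  using correl_matrix_Phi_in_corr_matrices assms unfolding Rstar_set_def by blast

text \<open>Each of \<open>X 0, X 1, X 2\<close> would have to be uncorrelated with exactly one of the other
  two, which is impossible for three indices.\<close>

lemma not_AE_Phi_sum_const_gaussian_vector:
  assumes M: "prob_space M" and X: "gaussian_vector M n X R" and R: "R \<in> corr_matrices n"
    and n: "n \<ge> 3"
  shows "\<not> (AE \<omega> in M. Phi (X 0 \<omega>) + Phi (X 1 \<omega>) + Phi (X 2 \<omega>) = c)"
proof
  assume sum_012: "AE \<omega> in M. Phi (X 0 \<omega>) + Phi (X 1 \<omega>) + Phi (X 2 \<omega>) = c"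
  then have sum_102: "AE \<omega> in M. Phi (X 1 \<omega>) + Phi (X 0 \<omega>) + Phi (X 2 \<omega>) = c"
    and sum_201: "AE \<omega> in M. Phi (X 2 \<omega>) + Phi (X 0 \<omega>) + Phi (X 1 \<omega>) = c"
    by (auto elim: eventually_mono simp: algebra_simps)
  have one_zero: "(R i j = 0) \<noteq> (R i k = 0)"
    if "AE \<omega> in M. Phi (X i \<omega>) + Phi (X j \<omega>) + Phi (X k \<omega>) = c"
      and "i < n" "j < n" "k < n" "i \<noteq> j" "i \<noteq> k" for i j k
    using that
    by (intro AE_Phi_sum_const_imp_one_corr_zero[OF M gaussian_vector_pair[OF X R]
          gaussian_vector_pair[OF X R] corr_matrices_entry_square_le_1[OF R]
          corr_matrices_entry_square_le_1[OF R]])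
  have "R 1 0 = R 0 1" "R 2 0 = R 0 2" "R 2 1 = R 1 2"
    using R n unfolding corr_matrices_def by auto
  then show False
    using one_zero[OF sum_012] one_zero[OF sum_102] one_zero[OF sum_201] n by auto
qed

section \<open>The block matrix\<close>

lemma block_matrix_quadratic_form:
  assumes n: "n \<ge> 3"
  shows "(\<Sum>i<n. \<Sum>j<n. x i * block_matrix n i j * x j) =
           ((x 0 - x 1)\<^sup>2 + (x 0 - x 2)\<^sup>2 + (x 1 - x 2)\<^sup>2) / 2 + (\<Sum>i=3..<n. (x i)\<^sup>2)"
proof -
  have split: "(\<Sum>i<n. f i) = (\<Sum>i<3. f i) + (\<Sum>i=3..<n. f i)" for f :: "nat \<Rightarrow> real"
    using n by (simp add: lessThan_atLeast0 sum.atLeastLessThan_concat)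
  have "(\<Sum>i<n. \<Sum>j<n. x i * block_matrix n i j * x j) =
      (\<Sum>i<3. \<Sum>j<3. x i * block_matrix n i j * x j) + (\<Sum>i=3..<n. \<Sum>j=3..<n. x i * block_matrix n i j * x j)"
    using n by (simp add: split sum.distrib block_matrix_def)
  also have "(\<Sum>i<3. \<Sum>j<3. x i * block_matrix n i j * x j) =
      x 0 * x 0 + x 1 * x 1 + x 2 * x 2 - x 0 * x 1 - x 0 * x 2 - x 1 * x 2"
    using n by (simp add: lessThan_nat_numeral block_matrix_def algebra_simps)
  also have "\<dots> = ((x 0 - x 1)\<^sup>2 + (x 0 - x 2)\<^sup>2 + (x 1 - x 2)\<^sup>2) / 2"
    by (simp add: power2_eq_square field_simps)
  also have "(\<Sum>i=3..<n. \<Sum>j=3..<n. x i * block_matrix n i j * x j) = (\<Sum>i=3..<n. (x i)\<^sup>2)"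
  proof (intro sum.cong refl)
    fix i assume i: "i \<in> {3..<n}"
    then have "(\<Sum>j=3..<n. x i * block_matrix n i j * x j) = (\<Sum>j=3..<n. if j = i then x i * x j else 0)"
      by (intro sum.cong refl) (auto simp: block_matrix_def)
    with i show "(\<Sum>j=3..<n. x i * block_matrix n i j * x j) = (x i)\<^sup>2"
      by (simp add: power2_eq_square)
  qed
  finally show ?thesis .
qed

lemma block_matrix_in_corr_matrices:
  assumes "n \<ge> 3"
  shows "block_matrix n \<in> corr_matrices n"
  unfolding corr_matrices_def
  by (auto simp: block_matrix_quadratic_form[OF assms] intro!: add_nonneg_nonneg sum_nonneg)
    (auto simp: block_matrix_def)

lemma block_matrix_notin_Rstar_set:
  assumes n: "n \<ge> 3"
  shows "block_matrix n \<notin> Rstar_set TYPE('a) n"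
proof
  assume "block_matrix n \<in> Rstar_set TYPE('a) n"
  then obtain M :: "'a measure" and X R where M: "prob_space M" and R: "R \<in> corr_matrices n"
    and X: "gaussian_vector M n X R" and S: "block_matrix n = correl_matrix M n (\<lambda>i \<omega>. Phi (X i \<omega>))"
    unfolding Rstar_set_def by blast
  have n2: "n \<ge> 2" using n by simp
  define x where "x i = (if i < 3 then 1 else 0 :: real)" for i :: nat
  have restrict: "(\<Sum>i<n. x i * f i) = f 0 + f 1 + f 2" for f :: "nat \<Rightarrow> real"
  proof -
    have "(\<Sum>i<n. x i * f i) = (\<Sum>i<n. if i \<in> {..<3} then f i else 0)"
      by (intro sum.cong) (auto simp: x_def)
    also have "\<dots> = (\<Sum>i\<in>{..<n} \<inter> {..<3}. f i)"
      by (rule sum.inter_restrict[symmetric]) simp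
    also have "{..<n} \<inter> {..<3} = {..<3::nat}" using n by auto
    finally show ?thesis by (simp add: lessThan_nat_numeral)
  qed
  have "(\<Sum>i<n. \<Sum>j<n. x i * block_matrix n i j * x j) = 0"
    using block_matrix_quadratic_form[OF n, of x] by (simp add: x_def)
  then have "AE \<omega> in M. Phi (X 0 \<omega>) + Phi (X 1 \<omega>) + Phi (X 2 \<omega>) = 3 * Phi_mean"
    using AE_Phi_combination_const[OF M X R n2, of x] restrict[of "\<lambda>_. 1"] restrict
    unfolding S by simp
  then show False
    using not_AE_Phi_sum_const_gaussian_vector[OF M X R n] by blast
qed

theorem mainTheorem8:
  fixes n :: nat
  assumes "n \<ge> 3"
  shows "Rstar_set TYPE('a) n \<subset> corr_matrices n \<and>
         block_matrix n \<in> corr_matrices n \<and>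
         block_matrix n \<notin> Rstar_set TYPE('a) n"
  using Rstar_set_subset_corr_matrices[of n] block_matrix_in_corr_matrices[OF assms]
    block_matrix_notin_Rstar_set[OF assms] assms by auto

end
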